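(* Let $M\ge1$ and $k\in\mathfrak{L}_M$. Then \[ V(k):=\beta(\kappa^{-1}(k))=\bigl\{b\in\mathbb{Z}^{M+1}\,\bigl|\,\min\{\mathbb{1},\tilde{k}\}\leq b\leq\min\{k,\tilde{k}\}\bigr\}; \] equivalently, $V(k)=V_0\times V_1\times\cdots\times V_M$, where $V_n=\bigl\{\min\{1,\tilde{k}_n\},\min\{1,\tilde{k}_n\}+1,\ldots,\min\{k_n,\tilde{k}_n\}\bigr\}$ for $0\leq n\leq M$.
   Context: Fix depths $z_{-1}<z_0<\cdots<z_M$. A (reflection) scattering sequence is a finite sequence $\mathsf{p}=(\mathsf{p}_0,\ldots,\mathsf{p}_L)$ with $L\geq 2$, $\mathsf{p}_0=\mathsf{p}_L=z_{-1}$, $\mathsf{p}_i\in\{z_0,\ldots,z_M\}$ for $1\le i\le L-1$, and for every $0\le i\le L-1$ there is $-1\le j\le M-1$ with $\{\mathsf{p}_i,\mathsf{p}_{i+1}\}=\{z_j,z_{j+1}\}$; $\mathsf{S}_M$ is the set of these. For $\mathsf{p}\in\mathsf{S}_M$ and $0\le n\le M$, let $k_n$ be the number of maximal runs of consecutive indices $i$ with $\mathsf{p}_i\in\{z_n,\ldots,z_M\}$, and $b_n$ the number of those runs of length at least $2$ (equivalently, containing an index $i$ with $\mathsf{p}_i=z_{n+1}$). Then $\kappa(\mathsf{p})=(k_0,\ldots,k_M)$ (transit count vector) and $\beta(\mathsf{p})=(b_0,\ldots,b_M)$ (branch count vector), so $\kappa,\beta:\mathsf{S}_M\to\mathbb{Z}^{M+1}$.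 $\mathfrak{L}_M=\{(k_0,\ldots,k_M)\in\mathbb{Z}_{\ge0}^{M+1}: k_0=1\text{ and for all }n\le M-1,\ k_n=0\Rightarrow k_{n+1}=0\}$. For $k=(k_0,\ldots,k_M)$, $\tilde{k}=(k_1,\ldots,k_M,0)$; $\mathbb{1}=(1,\ldots,1)$; $\min$ and $\le$ are entrywise. *)

theory Defs
  imports Complex_Main
begin

text \<open>Depths are z(-1) < z(0) < ... < z(M); a scattering sequence is a list
  p = [p_0, ..., p_L] of depths (so length p = L + 1).\<close>

definition scat_seq :: "(int \<Rightarrow> real) \<Rightarrow> nat \<Rightarrow> real list \<Rightarrow> bool" where
  "scat_seq z M p \<longleftrightarrow>
     length p \<ge> 3 \<and>
     p ! 0 = z (-1) \<and> p ! (length p - 1) = z (-1) \<and>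
     (\<forall>i. 1 \<le> i \<and> i \<le> length p - 2 \<longrightarrow> p ! i \<in> z ` {0..int M}) \<and>
     (\<forall>i < length p - 1. \<exists>j \<in> {-1..int M - 1}. {p ! i, p ! (i+1)} = {z j, z (j+1)})"

definition runs :: "(int \<Rightarrow> real) \<Rightarrow> nat \<Rightarrow> real list \<Rightarrow> nat \<Rightarrow> (nat \<times> nat) set" where
  "runs z M p n = {(a, b). a \<le> b \<and> b < length p \<and>
      (\<forall>i. a \<le> i \<and> i \<le> b \<longrightarrow> p ! i \<in> z ` {int n..int M}) \<and>
      (a = 0 \<or> p ! (a - 1) \<notin> z ` {int n..int M}) \<and>
      (b = length p - 1 \<or> p ! (b + 1) \<notin> z ` {int n..int M})}"

definition kappa :: "(int \<Rightarrow> real) \<Rightarrow> nat \<Rightarrow> real list \<Rightarrow> int list" where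
  "kappa z M p = map (\<lambda>n. int (card (runs z M p n))) [0..<M+1]"

definition beta :: "(int \<Rightarrow> real) \<Rightarrow> nat \<Rightarrow> real list \<Rightarrow> int list" where
  "beta z M p = map (\<lambda>n. int (card {(a, b) \<in> runs z M p n. a < b})) [0..<M+1]"

definition LM :: "nat \<Rightarrow> int list set" where
  "LM M = {k. length k = M + 1 \<and> (\<forall>n < M + 1. k ! n \<ge> 0) \<and> k ! 0 = 1 \<and>
              (\<forall>n < M. k ! n = 0 \<longrightarrow> k ! (n+1) = 0)}"

definition ktilde :: "int list \<Rightarrow> int list" where
  "ktilde k = tl k @ [0]"

end

theory Submission
  imports Defs
begin

text \<open>
  Since z is injective, a scattering sequence is z \<circ> h for an integer walk h from -1 back to -1
  with steps \<plusminus>1 inside {0..M}. A maximal run at levels \<ge> n starts exactly after an up-step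
  n - 1 \<rightarrow> n, and it has length at least 2 exactly when this step is followed by n \<rightarrow> n + 1.
  So k_n counts up-steps into n and b_n counts climbs n - 1, n, n + 1. Every climb uses an
  up-step into n and one into n + 1; since the walk starts below n, the first up-step into n + 1 is
  part of a climb; and no climb passes the top level M. Conversely, a walk
  is assembled from excursions (a, b), each rising from a to b and then descending to just above
  the start of the next one; its counts at level n are the numbers of excursions with a < n \<le> b,
  resp. a < n < b, and a suitable list of excursions is built level by level.
\<close>

section \<open>Counting patterns in integer walks\<close>

fun up_count :: "int \<Rightarrow> int list \<Rightarrow> nat" where
  "up_count n (x # y # r) = (if x = n - 1 \<and> y = n then 1 else 0) + up_count n (y # r)"
| "up_count n _ = 0"

fun climb_count :: "int \<Rightarrow> int list \<Rightarrow> nat" where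
  "climb_count n (x # y # w # r) =
     (if x = n - 1 \<and> y = n \<and> w = n + 1 then 1 else 0) + climb_count n (y # w # r)"
| "climb_count n _ = 0"

fun unit_steps :: "int list \<Rightarrow> bool" where
  "unit_steps (x # y # r) \<longleftrightarrow> \<bar>y - x\<bar> = 1 \<and> unit_steps (y # r)"
| "unit_steps _ \<longleftrightarrow> True"

lemma up_count_Cons:
  "up_count n (x # r) = (if r \<noteq> [] \<and> x = n - 1 \<and> hd r = n then 1 else 0) + up_count n r"
  by (cases r) auto

lemma climb_count_Cons:
  "climb_count n (x # r) =
     (if length r \<ge> 2 \<and> x = n - 1 \<and> hd r = n \<and> hd (tl r) = n + 1 then 1 else 0) + climb_count n r"
  by (cases "(n, x # r)" rule: climb_count.cases) auto

lemma unit_steps_Cons: "unit_steps (x # r) \<longleftrightarrow> (r = [] \<or> \<bar>hd r - x\<bar> = 1) \<and> unit_steps r"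
  by (cases r) auto

lemma up_count_append:
  "up_count n (xs @ ys) = up_count n xs + up_count n ys +
     (if xs \<noteq> [] \<and> ys \<noteq> [] \<and> last xs = n - 1 \<and> hd ys = n then 1 else 0)"
  by (induction xs) (auto simp: up_count_Cons)

lemma up_count_append_desc:
  "xs = [] \<or> ys = [] \<or> hd ys < last xs \<Longrightarrow> up_count n (xs @ ys) = up_count n xs + up_count n ys"
  by (auto simp: up_count_append)

lemma climb_count_append_desc:
  "xs = [] \<or> ys = [] \<or> hd ys < last xs \<Longrightarrow> climb_count n (xs @ ys) = climb_count n xs + climb_count n ys"
proof (induction xs)
  case (Cons x xs)
  then show ?case
    by (cases xs) (auto simp: climb_count_Cons hd_append Suc_le_eq)
qed simp

lemma unit_steps_append:
  "unit_steps xs \<Longrightarrow> unit_steps ys \<Longrightarrow> xs = [] \<or> ys = [] \<or> \<bar>hd ys - last xs\<bar> = 1 \<Longrightarrow>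
   unit_steps (xs @ ys)"
  by (induction xs) (auto simp: unit_steps_Cons hd_append)

lemma unit_steps_snoc: "unit_steps (xs @ [x]) \<longleftrightarrow> unit_steps xs \<and> (xs = [] \<or> \<bar>x - last xs\<bar> = 1)"
  by (induction xs) (auto simp: unit_steps_Cons)

lemma unit_steps_rev: "unit_steps (rev xs) \<longleftrightarrow> unit_steps xs"
  by (induction xs) (auto simp: unit_steps_Cons unit_steps_snoc last_rev abs_minus_commute)

lemma unit_steps_iff_nth: "unit_steps h \<longleftrightarrow> (\<forall>i. Suc i < length h \<longrightarrow> \<bar>h ! Suc i - h ! i\<bar> = 1)"
proof (induction h rule: unit_steps.induct)
  case (1 x y r)
  show ?case
  proof
    assume "unit_steps (x # y # r)"
    then show "\<forall>i. Suc i < length (x # y # r) \<longrightarrow> \<bar>(x # y # r) ! Suc i - (x # y # r) ! i\<bar> = 1"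
      using 1 by (auto simp: nth_Cons split: nat.splits)
  next
    assume steps: "\<forall>i. Suc i < length (x # y # r) \<longrightarrow> \<bar>(x # y # r) ! Suc i - (x # y # r) ! i\<bar> = 1"
    then have "\<bar>y - x\<bar> = 1" by (metis One_nat_def Suc_less_eq length_Cons nth_Cons_0 nth_Cons_Suc zero_less_Suc)
    moreover have "\<forall>i. Suc i < length (y # r) \<longrightarrow> \<bar>(y # r) ! Suc i - (y # r) ! i\<bar> = 1"
      using steps by (metis Suc_less_eq length_Cons nth_Cons_Suc)
    ultimately show "unit_steps (x # y # r)" using 1 by simp
  qed
qed auto

lemma hd_upto: "a \<le> b \<Longrightarrow> hd [a..b] = a"
  by (simp add: upto_rec1)

lemma last_upto: "a \<le> b \<Longrightarrow> last [a..b] = b"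
  by (simp add: upto_rec2)

lemma unit_steps_upto: "unit_steps [a..b]"
proof (induction a b rule: upto.induct)
  case (1 a b)
  then show ?case
    by (cases "a + 1 \<le> b") (auto simp: upto.simps[of a] unit_steps_Cons hd_upto)
qed

lemma up_count_upto: "up_count n [a..b] = (if a < n \<and> n \<le> b then 1 else 0)"
proof (induction a b rule: upto.induct)
  case (1 a b)
  then show ?case
    by (cases "a + 1 \<le> b") (auto simp: upto.simps[of a] up_count_Cons hd_upto)
qed

lemma climb_count_upto: "climb_count n [a..b] = (if a < n \<and> n < b then 1 else 0)"
proof (induction a b rule: upto.induct)
  case (1 a b)
  then show ?case
    by (cases "a + 2 \<le> b") (auto simp: upto.simps[of a] climb_count_Cons hd_upto upto_rec1[of "a + 1"])
qed

lemma up_count_sorted_desc: "sorted_wrt (>) xs \<Longrightarrow> up_count n xs = 0"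
proof (induction xs)
  case (Cons x xs)
  then show ?case by (cases xs) (auto simp: up_count_Cons)
qed simp

lemma climb_count_le_up_count: "climb_count n xs \<le> up_count n xs"
  by (induction xs) (auto simp: climb_count_Cons up_count_Cons)

lemma climb_count_Cons_le_up_count: "climb_count n (x # xs) \<le> up_count (n + 1) xs"
proof (induction xs arbitrary: x)
  case (Cons y xs)
  then show ?case by (auto simp: climb_count_Cons up_count_Cons[of _ y])
qed simp

lemma climb_count_le_up_count_Suc: "climb_count n xs \<le> up_count (n + 1) xs"
proof (cases xs)
  case (Cons x r)
  then show ?thesis using climb_count_Cons_le_up_count[of n x r] up_count_Cons[of "n + 1" x r] by simp
qed simp

lemma up_count_rev_upto: "up_count n (rev [a..b]) = 0"
  by (rule up_count_sorted_desc) (simp add: sorted_wrt_rev)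

lemma climb_count_rev_upto: "climb_count n (rev [a..b]) = 0"
  using climb_count_le_up_count[of n "rev [a..b]"] by (simp add: up_count_rev_upto)

lemma climb_count_top: "\<forall>x\<in>set xs. x \<le> M \<Longrightarrow> climb_count M xs = 0"
  by (induction M xs rule: climb_count.induct) auto

lemma climb_count_pos:
  "unit_steps l \<Longrightarrow> hd l \<le> n - 1 \<Longrightarrow> up_count (n + 1) l > 0 \<Longrightarrow> climb_count n l > 0"
proof (induction "length l" arbitrary: l rule: less_induct)
  case less
  obtain x y r where l: "l = x # y # r"
    using less.prems(3) by (cases "(n + 1, l)" rule: up_count.cases) auto
  have x: "x \<le> n - 1" using less.prems(2) l by simp
  have up_yr: "up_count (n + 1) (y # r) > 0" using less.prems(3) x unfolding l by (auto split: if_splits)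
  have steps_yr: "unit_steps (y # r)" and xy: "\<bar>y - x\<bar> = 1" using less.prems(1) unfolding l by auto
  have mono: "climb_count n (y # r) \<le> climb_count n l" unfolding l by (simp add: climb_count_Cons)
  show ?case
  proof (cases "y \<le> n - 1")
    case True
    then show ?thesis using less.hyps[of "y # r"] l steps_yr up_yr mono by fastforce
  next
    case False
    then have yx: "y = n" "x = n - 1" using xy x by auto
    then obtain w r' where r: "r = w # r'" using up_yr by (cases r) auto
    have "\<bar>w - n\<bar> = 1" and steps_wr: "unit_steps (w # r')" using steps_yr unfolding r yx by auto
    then consider "w = n + 1" | "w = n - 1" by linarith
    then show ?thesis
    proof cases
      case 1
      then show ?thesis unfolding l r yx by simp
    next
      case 2
      have "up_count (n + 1) (w # r') > 0" using up_yr unfolding r yx 2 by (auto split: if_splits)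
      then have "climb_count n (w # r') > 0" using less.hyps[of "w # r'"] l r steps_wr 2 by auto
      moreover have "climb_count n (w # r') \<le> climb_count n l"
        unfolding l r yx 2 by (simp add: climb_count_Cons)
      ultimately show ?thesis by simp
    qed
  qed
qed

lemma card_Collect_nat_split:
  assumes "\<And>i. P i \<Longrightarrow> i < N"
  shows "card {i. P i} = (if P 0 then 1 else 0) + card {i. P (Suc i)}"
proof -
  have "finite {i. P (Suc i)}"
    using assms by (metis Suc_lessD finite_nat_set_iff_bounded mem_Collect_eq)
  moreover have "{i. P i} = {i. i = 0 \<and> P 0} \<union> Suc ` {i. P (Suc i)}"
  proof (rule set_eqI)
    show "i \<in> {i. P i} \<longleftrightarrow> i \<in> {i. i = 0 \<and> P 0} \<union> Suc ` {i. P (Suc i)}" for i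
      by (cases i) auto
  qed
  ultimately show ?thesis by (simp add: card_Un_disjoint card_image)
qed

lemma card_up_positions: "card {i. Suc i < length h \<and> h ! i = n - 1 \<and> h ! Suc i = n} = up_count n h"
proof (induction n h rule: up_count.induct)
  case (1 n x y r)
  then show ?case by (subst card_Collect_nat_split[where N = "length (x # y # r)"]) auto
qed simp_all

lemma card_climb_positions:
  "card {i. Suc (Suc i) < length h \<and> h ! i = n - 1 \<and> h ! Suc i = n \<and> h ! Suc (Suc i) = n + 1} =
   climb_count n h"
proof (induction n h rule: climb_count.induct)
  case (1 n x y w r)
  then show ?case by (subst card_Collect_nat_split[where N = "length (x # y # w # r)"]) auto
qed (auto simp: Suc_less_eq2)

section \<open>Scattering sequences as integer walks\<close>

definition level_walk :: "nat \<Rightarrow> int list \<Rightarrow> bool" where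
  "level_walk M h \<longleftrightarrow> length h \<ge> 3 \<and> h ! 0 = -1 \<and> h ! (length h - 1) = -1 \<and>
     (\<forall>i. 1 \<le> i \<and> i \<le> length h - 2 \<longrightarrow> 0 \<le> h ! i \<and> h ! i \<le> int M) \<and> unit_steps h"

definition level_runs :: "int \<Rightarrow> int list \<Rightarrow> (nat \<times> nat) set" where
  "level_runs n h = {(a, b). a \<le> b \<and> b < length h \<and> (\<forall>i. a \<le> i \<and> i \<le> b \<longrightarrow> n \<le> h ! i) \<and>
      (a = 0 \<or> h ! (a - 1) < n) \<and> (b = length h - 1 \<or> h ! (b + 1) < n)}"

lemma level_walk_range: "level_walk M h \<Longrightarrow> i < length h \<Longrightarrow> -1 \<le> h ! i \<and> h ! i \<le> int M"
proof -
  assume h: "level_walk M h" and i: "i < length h"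
  consider "i = 0" | "i = length h - 1" | "1 \<le> i \<and> i \<le> length h - 2" using i by linarith
  then show ?thesis using h unfolding level_walk_def by cases force+
qed

lemma level_walk_step: "level_walk M h \<Longrightarrow> Suc i < length h \<Longrightarrow> \<bar>h ! Suc i - h ! i\<bar> = 1"
  unfolding level_walk_def unit_steps_iff_nth by blast

lemma level_runs_start:
  assumes "level_walk M h" "0 \<le> n" "(a, b) \<in> level_runs n h"
  shows "a \<noteq> 0 \<and> h ! (a - 1) = n - 1 \<and> h ! a = n"
proof -
  have run: "a \<le> b" "b < length h" "n \<le> h ! a" "a = 0 \<or> h ! (a - 1) < n"
    using assms(3) unfolding level_runs_def by auto
  then have "a \<noteq> 0" using assms(1,2) unfolding level_walk_def by force
  with run show ?thesis using level_walk_step[OF assms(1), of "a - 1"] by auto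
qed

lemma level_run_from_up:
  assumes h: "level_walk M h" and n: "0 \<le> n"
    and up: "Suc i < length h" "h ! i < n" "n \<le> h ! Suc i"
  obtains b where "(Suc i, b) \<in> level_runs n h"
    and "Suc (Suc i) < length h \<and> n \<le> h ! Suc (Suc i) \<Longrightarrow> Suc i < b"
proof -
  define S where "S = {j. Suc i \<le> j \<and> j < length h \<and> h ! j < n}"
  have "length h - 1 \<in> S"
    using h up n unfolding S_def level_walk_def by auto
  then have cS: "(LEAST j. j \<in> S) \<in> S" and cmin: "\<And>j. j \<in> S \<Longrightarrow> (LEAST j. j \<in> S) \<le> j"
    by (auto intro: LeastI Least_le)
  define b where "b = (LEAST j. j \<in> S) - 1"
  have c: "Suc b = (LEAST j. j \<in> S)" "Suc i \<le> b"
    using cS up(3) unfolding b_def S_def by (auto simp: le_less)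
  have "n \<le> h ! l" if "Suc i \<le> l" "l \<le> b" for l
  proof -
    have "l \<notin> S" using cmin c(1) that(2) by (metis not_less_eq_eq)
    then show ?thesis using that cS c unfolding S_def by auto
  qed
  then have "(Suc i, b) \<in> level_runs n h"
    using c cS up(2) unfolding level_runs_def S_def by auto
  moreover have "Suc i < b" if "Suc (Suc i) < length h \<and> n \<le> h ! Suc (Suc i)"
    using that cS c unfolding S_def by (cases "b = Suc i") auto
  ultimately show ?thesis using that by blast
qed

lemma inj_on_level_runs_start: "inj_on fst (level_runs n h)"
proof -
  have not_less: "\<not> c < c'" if "(a, c) \<in> level_runs n h" "(a, c') \<in> level_runs n h" for a c c'
  proof
    assume "c < c'"
    then have "n \<le> h ! (c + 1)" "c' < length h" using that unfolding level_runs_def by auto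
    then show False using that \<open>c < c'\<close> unfolding level_runs_def by auto
  qed
  show ?thesis
    by (rule inj_onI) (metis not_less linorder_neqE_nat prod.collapse)
qed

lemma level_runs_starts:
  assumes "level_walk M h" "0 \<le> n"
  shows "fst ` level_runs n h = Suc ` {i. Suc i < length h \<and> h ! i = n - 1 \<and> h ! Suc i = n}"
proof (intro set_eqI iffI)
  fix a assume "a \<in> fst ` level_runs n h"
  then obtain b where r: "(a, b) \<in> level_runs n h" by auto
  then have "a < length h" unfolding level_runs_def by auto
  with level_runs_start[OF assms r] show "a \<in> Suc ` {i. Suc i < length h \<and> h ! i = n - 1 \<and> h ! Suc i = n}"
    by (auto simp: image_iff intro: exI[of _ "a - 1"])
next
  fix a assume "a \<in> Suc ` {i. Suc i < length h \<and> h ! i = n - 1 \<and> h ! Suc i = n}"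
  then obtain i where "a = Suc i" "Suc i < length h" "h ! i = n - 1" "h ! Suc i = n" by auto
  moreover obtain b where "(Suc i, b) \<in> level_runs n h"
    using level_run_from_up[OF assms, of i] calculation by auto
  ultimately show "a \<in> fst ` level_runs n h" by force
qed

lemma long_level_runs_starts:
  assumes "level_walk M h" "0 \<le> n"
  shows "fst ` {(a, b) \<in> level_runs n h. a < b} =
    Suc ` {i. Suc (Suc i) < length h \<and> h ! i = n - 1 \<and> h ! Suc i = n \<and> h ! Suc (Suc i) = n + 1}"
proof (intro set_eqI iffI)
  fix a assume "a \<in> fst ` {(a, b) \<in> level_runs n h. a < b}"
  then obtain b where r: "(a, b) \<in> level_runs n h" and "a < b" by auto
  then have "b < length h" "n \<le> h ! Suc a" unfolding level_runs_def by auto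
  with level_runs_start[OF assms r] level_walk_step[OF assms(1), of a] \<open>a < b\<close>
  show "a \<in> Suc ` {i. Suc (Suc i) < length h \<and> h ! i = n - 1 \<and> h ! Suc i = n \<and> h ! Suc (Suc i) = n + 1}"
    by (auto simp: image_iff intro!: exI[of _ "a - 1"])
next
  fix a
  assume "a \<in> Suc ` {i. Suc (Suc i) < length h \<and> h ! i = n - 1 \<and> h ! Suc i = n \<and> h ! Suc (Suc i) = n + 1}"
  then obtain i where "a = Suc i" "Suc (Suc i) < length h" "h ! i = n - 1" "h ! Suc i = n"
    "h ! Suc (Suc i) = n + 1" by auto
  moreover obtain b where "(Suc i, b) \<in> level_runs n h" "Suc i < b"
    using level_run_from_up[OF assms, of i] calculation by auto
  ultimately show "a \<in> fst ` {(a, b) \<in> level_runs n h. a < b}" by force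
qed

lemma card_level_runs:
  assumes "level_walk M h" "0 \<le> n"
  shows "card (level_runs n h) = up_count n h"
    and "card {(a, b) \<in> level_runs n h. a < b} = climb_count n h"
proof -
  have "card (level_runs n h) = card (fst ` level_runs n h)"
    by (rule card_image[symmetric, OF inj_on_level_runs_start])
  also have "\<dots> = up_count n h"
    unfolding level_runs_starts[OF assms] by (simp add: card_image card_up_positions)
  finally show "card (level_runs n h) = up_count n h" .
  have "card {(a, b) \<in> level_runs n h. a < b} = card (fst ` {(a, b) \<in> level_runs n h. a < b})"
    by (rule card_image[symmetric, OF inj_on_subset[OF inj_on_level_runs_start]]) auto
  also have "\<dots> = climb_count n h"
    unfolding long_level_runs_starts[OF assms] by (simp add: card_image card_climb_positions)
  finally show "card {(a, b) \<in> level_runs n h. a < b} = climb_count n h" .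
qed

lemma strict_mono_on_image_mem_iff:
  fixes z :: "int \<Rightarrow> real"
  assumes "strict_mono_on {-1..int M} z" "-1 \<le> x" "x \<le> int M"
  shows "z x \<in> z ` {int n..int M} \<longleftrightarrow> int n \<le> x"
proof -
  have "inj_on z {-1..int M}" using assms(1) by (rule strict_mono_on_imp_inj_on)
  then show ?thesis using assms(2,3) by (auto dest: inj_onD)
qed

lemma runs_map_level_walk:
  fixes z :: "int \<Rightarrow> real"
  assumes z: "strict_mono_on {-1..int M} z" and h: "level_walk M h"
  shows "runs z M (map z h) n = level_runs (int n) h"
proof -
  have key: "z (h ! i) \<in> z ` {int n..int M} \<longleftrightarrow> int n \<le> h ! i" if "i < length h" for i
    using strict_mono_on_image_mem_iff[OF z] level_walk_range[OF h that] by simp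
  have "(a, b) \<in> runs z M (map z h) n \<longleftrightarrow> (a, b) \<in> level_runs (int n) h" for a b
  proof (cases "a \<le> b \<and> b < length h")
    case True
    have "a - 1 < length h" using True by auto
    show ?thesis
    proof (cases "b = length h - 1")
      case False
      then have "Suc b < length h" using True by auto
      then show ?thesis using True \<open>a - 1 < length h\<close> unfolding runs_def level_runs_def
        by (auto simp: key not_le)
    qed (use True \<open>a - 1 < length h\<close> in \<open>auto simp: runs_def level_runs_def key not_le\<close>)
  qed (auto simp: runs_def level_runs_def)
  then show ?thesis by auto
qed

lemma level_walk_scat_seq:
  fixes z :: "int \<Rightarrow> real"
  assumes h: "level_walk M h"
  shows "scat_seq z M (map z h)"
proof -
  have adjacent: "\<exists>j \<in> {-1..int M - 1}. {map z h ! i, map z h ! (i + 1)} = {z j, z (j + 1)}"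
    if i: "i < length h - 1" for i
  proof -
    have "\<bar>h ! Suc i - h ! i\<bar> = 1" using level_walk_step[OF h, of i] i by simp
    moreover have "-1 \<le> h ! i \<and> h ! i \<le> int M" "-1 \<le> h ! Suc i \<and> h ! Suc i \<le> int M"
      using level_walk_range[OF h, of i] level_walk_range[OF h, of "Suc i"] i by auto
    ultimately consider "h ! Suc i = h ! i + 1 \<and> h ! i \<in> {-1..int M - 1}"
      | "h ! i = h ! Suc i + 1 \<and> h ! Suc i \<in> {-1..int M - 1}" by fastforce
    then show ?thesis using i by cases (auto intro: bexI[of _ "h ! i"] bexI[of _ "h ! Suc i"])
  qed
  have "3 \<le> length h" "h ! 0 = -1" "h ! (length h - 1) = -1"
    "\<forall>i. 1 \<le> i \<and> i \<le> length h - 2 \<longrightarrow> 0 \<le> h ! i \<and> h ! i \<le> int M"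
    using h unfolding level_walk_def by auto
  moreover have "map z h ! 0 = z (-1)" "map z h ! (length h - 1) = z (-1)"
  proof -
    have "0 < length h" "length h - 1 < length h" using calculation by auto
    then show "map z h ! 0 = z (-1)" "map z h ! (length h - 1) = z (-1)"
      using calculation by simp_all
  qed
  ultimately show ?thesis using adjacent unfolding scat_seq_def by auto
qed

lemma scat_seq_level_walk:
  fixes z :: "int \<Rightarrow> real"
  assumes z: "strict_mono_on {-1..int M} z" and p: "scat_seq z M p"
  obtains h where "level_walk M h" "p = map z h"
proof -
  have inj: "inj_on z {-1..int M}" using z by (rule strict_mono_on_imp_inj_on)
  have p': "length p \<ge> 3" "p ! 0 = z (-1)" "p ! (length p - 1) = z (-1)"
     "\<forall>i. 1 \<le> i \<and> i \<le> length p - 2 \<longrightarrow> p ! i \<in> z ` {0..int M}"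
     "\<forall>i < length p - 1. \<exists>j \<in> {-1..int M - 1}. {p ! i, p ! (i + 1)} = {z j, z (j + 1)}"
    using p unfolding scat_seq_def by auto
  define h where "h = map (the_inv_into {-1..int M} z) p"
  have p_range: "p ! i \<in> z ` {-1..int M}" if i: "i < length p" for i
  proof -
    consider "i = 0" | "i = length p - 1" | "1 \<le> i \<and> i \<le> length p - 2" using i by linarith
    then show ?thesis using p' by cases force+
  qed
  have h_nth: "z (h ! i) = p ! i" "h ! i \<in> {-1..int M}" if "i < length p" for i
    using that p_range[OF that] f_the_inv_into_f[OF inj] the_inv_into_into[OF inj _ subset_refl]
    unfolding h_def by auto
  have h_eq: "h ! i = j" if "i < length p" "p ! i = z j" "j \<in> {-1..int M}" for i j
    using h_nth[OF that(1)] that(2,3) inj by (auto dest: inj_onD)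
  have "p = map z h" unfolding h_def by (rule nth_equalityI) (use h_nth in \<open>auto simp: h_def\<close>)
  moreover have "unit_steps h" unfolding unit_steps_iff_nth
  proof (intro allI impI)
    fix i assume i: "Suc i < length h"
    then have "i < length p - 1" unfolding h_def by simp
    then obtain j where j: "j \<in> {-1..int M - 1}" "{p ! i, p ! (i + 1)} = {z j, z (j + 1)}"
      using p'(5)[rule_format, of i] unfolding h_def by auto
    then have "p ! i = z j \<and> p ! Suc i = z (j + 1) \<or> p ! i = z (j + 1) \<and> p ! Suc i = z j"
      by (auto simp: doubleton_eq_iff)
    then show "\<bar>h ! Suc i - h ! i\<bar> = 1"
      using h_eq[of i] h_eq[of "Suc i"] i j(1) unfolding h_def by auto
  qed
  moreover have len: "length h = length p" unfolding h_def by simp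
  moreover have "0 \<le> h ! i \<and> h ! i \<le> int M" if "1 \<le> i \<and> i \<le> length h - 2" for i
    using that p'(1,4) h_eq[of i] len by force
  moreover have "h ! 0 = -1" "h ! (length h - 1) = -1"
  proof -
    have "0 < length p" "length p - 1 < length p" using p'(1) by auto
    then show "h ! 0 = -1" "h ! (length h - 1) = -1"
      using h_eq[of 0 "-1"] h_eq[of "length p - 1" "-1"] p'(2,3) len by auto
  qed
  ultimately show ?thesis using that p'(1) unfolding level_walk_def by auto
qed

lemma kappa_map_level_walk:
  fixes z :: "int \<Rightarrow> real"
  assumes "strict_mono_on {-1..int M} z" "level_walk M h"
  shows "kappa z M (map z h) = map (\<lambda>n. int (up_count (int n) h)) [0..<M + 1]"
  using runs_map_level_walk[OF assms] card_level_runs(1)[OF assms(2)] by (simp add: kappa_def)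

lemma beta_map_level_walk:
  fixes z :: "int \<Rightarrow> real"
  assumes "strict_mono_on {-1..int M} z" "level_walk M h"
  shows "beta z M (map z h) = map (\<lambda>n. int (climb_count (int n) h)) [0..<M + 1]"
  using runs_map_level_walk[OF assms] card_level_runs(2)[OF assms(2)] by (simp add: beta_def)

section \<open>Walks built from excursions\<close>

definition span_count :: "int \<Rightarrow> (int \<times> int) list \<Rightarrow> nat" where
  "span_count n P = length (filter (\<lambda>(a, b). a < n \<and> n \<le> b) P)"

definition inner_span_count :: "int \<Rightarrow> (int \<times> int) list \<Rightarrow> nat" where
  "inner_span_count n P = length (filter (\<lambda>(a, b). a < n \<and> n < b) P)"

lemma span_count_simps [simp]:
  "span_count n [] = 0"
  "span_count n ((a, b) # P) = (if a < n \<and> n \<le> b then 1 else 0) + span_count n P"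
  "span_count n (P @ Q) = span_count n P + span_count n Q"
  "span_count n (replicate s (a, b)) = (if a < n \<and> n \<le> b then s else 0)"
  by (simp_all add: span_count_def)

lemma inner_span_count_simps [simp]:
  "inner_span_count n [] = 0"
  "inner_span_count n ((a, b) # P) = (if a < n \<and> n < b then 1 else 0) + inner_span_count n P"
  "inner_span_count n (P @ Q) = inner_span_count n P + inner_span_count n Q"
  "inner_span_count n (replicate s (a, b)) = (if a < n \<and> n < b then s else 0)"
  by (simp_all add: inner_span_count_def)

fun chained :: "(int \<times> int) list \<Rightarrow> bool" where
  "chained ((a, b) # (a', b') # P) \<longleftrightarrow> a' < b \<and> chained ((a', b') # P)"
| "chained _ \<longleftrightarrow> True"

fun excursion_walk :: "(int \<times> int) list \<Rightarrow> int list" where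
  "excursion_walk [] = []"
| "excursion_walk [(a, b)] = [a..b] @ rev [0..b - 1]"
| "excursion_walk ((a, b) # (a', b') # P) = [a..b] @ rev [a' + 1..b - 1] @ excursion_walk ((a', b') # P)"

lemma hd_rev_upto: "a \<le> b \<Longrightarrow> hd (rev [a..b]) = b"
  by (simp add: hd_rev last_upto)

lemma last_rev_upto: "a \<le> b \<Longrightarrow> last (rev [a..b]) = a"
  by (simp add: last_rev hd_upto)

lemma excursion_walk_hd_last:
  assumes "\<forall>(a, b) \<in> set P. a < b \<and> -1 \<le> a" "P \<noteq> []"
  shows "excursion_walk P \<noteq> [] \<and> hd (excursion_walk P) = fst (hd P) \<and> last (excursion_walk P) = 0"
  using assms
proof (induction P rule: excursion_walk.induct)
  case (2 a b)
  then show ?case by (cases "1 \<le> b") (auto simp: hd_upto last_rev_upto last_upto)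
qed (auto simp: hd_upto)

lemma excursion_walk_counts:
  assumes "\<forall>(a, b) \<in> set P. a < b \<and> -1 \<le> a" "chained P"
  shows "up_count n (excursion_walk P) = span_count n P \<and>
         climb_count n (excursion_walk P) = inner_span_count n P"
  using assms
proof (induction P rule: excursion_walk.induct)
  case (2 a b)
  have "[a..b] = [] \<or> rev [0..b - 1] = [] \<or> hd (rev [0..b - 1]) < last [a..b]"
    using 2 by (cases "1 \<le> b") (auto simp: hd_rev_upto last_upto)
  then show ?case
    using up_count_append_desc climb_count_append_desc
    by (simp add: up_count_upto climb_count_upto up_count_rev_upto climb_count_rev_upto)
next
  case (3 a b a' b' P)
  let ?W = "excursion_walk ((a', b') # P)"
  have ab: "a < b" "a' < b'" "a' < b" "-1 \<le> a'" using "3.prems" by auto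
  have W: "?W \<noteq> []" "hd ?W = a'"
    using excursion_walk_hd_last[of "(a', b') # P"] "3.prems"(1) by auto
  have "[a..b] = [] \<or> rev [a' + 1..b - 1] @ ?W = [] \<or> hd (rev [a' + 1..b - 1] @ ?W) < last [a..b]"
    and "rev [a' + 1..b - 1] = [] \<or> ?W = [] \<or> hd ?W < last (rev [a' + 1..b - 1])"
    using ab W by (cases "a' + 1 \<le> b - 1"; auto simp: hd_rev_upto last_upto last_rev_upto)+
  then show ?case
    using "3.IH" "3.prems" up_count_append_desc climb_count_append_desc
    by (simp add: up_count_upto climb_count_upto up_count_rev_upto climb_count_rev_upto)
qed simp

lemma unit_steps_excursion_walk:
  assumes "\<forall>(a, b) \<in> set P. a < b \<and> -1 \<le> a" "chained P"
  shows "unit_steps (excursion_walk P)"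
  using assms
proof (induction P rule: excursion_walk.induct)
  case (2 a b)
  then show ?case
    by (cases "1 \<le> b") (auto intro!: unit_steps_append simp: unit_steps_upto unit_steps_rev hd_rev_upto last_upto)
next
  case (3 a b a' b' P)
  let ?W = "excursion_walk ((a', b') # P)"
  have ab: "a < b" "a' < b'" "a' < b" "-1 \<le> a'" using "3.prems" by auto
  have W: "?W \<noteq> []" "hd ?W = a'" "unit_steps ?W"
    using excursion_walk_hd_last[of "(a', b') # P"] "3.prems" "3.IH" by auto
  have "unit_steps (rev [a' + 1..b - 1] @ ?W)"
    using ab W by (cases "a' + 1 \<le> b - 1")
      (auto intro!: unit_steps_append simp: unit_steps_upto unit_steps_rev last_rev_upto)
  then show ?case
    using ab W by (cases "a' + 1 \<le> b - 1")
      (auto intro!: unit_steps_append simp: unit_steps_upto last_upto hd_rev_upto)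
qed simp

lemma set_excursion_walk:
  "\<forall>(a, b) \<in> set P. 0 \<le> a \<and> b \<le> M \<Longrightarrow> set (excursion_walk P) \<subseteq> {0..M}"
  by (induction P rule: excursion_walk.induct) auto

fun raise_tops :: "nat \<Rightarrow> int \<Rightarrow> (int \<times> int) list \<Rightarrow> (int \<times> int) list" where
  "raise_tops r d [] = []"
| "raise_tops r d ((a, b) # P) =
     (if 0 < r \<and> b = d then (a, d + 1) # raise_tops (r - 1) d P else (a, b) # raise_tops r d P)"

lemma map_fst_raise_tops: "map fst (raise_tops r d P) = map fst P"
  by (induction r d P rule: raise_tops.induct) auto

lemma raise_tops_bounds:
  "\<forall>(a, b) \<in> set P. a < b \<and> b \<le> d \<Longrightarrow> \<forall>(a, b) \<in> set (raise_tops r d P). a < b \<and> b \<le> d + 1"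
  by (induction r d P rule: raise_tops.induct) auto

lemma span_counts_raise_tops:
  assumes "\<forall>(a, b) \<in> set P. a < b \<and> b \<le> d" "r \<le> length (filter (\<lambda>(a, b). b = d) P)"
  shows "span_count n (raise_tops r d P) = span_count n P + (if n = d + 1 then r else 0) \<and>
    inner_span_count n (raise_tops r d P) = inner_span_count n P + (if n = d then r else 0)"
  using assms
proof (induction r d P rule: raise_tops.induct)
  case (2 r d a b P)
  have P: "\<forall>(a, b) \<in> set P. a < b \<and> b \<le> d" and ab: "a < b" "b \<le> d" using "2.prems"(1) by auto
  show ?case
  proof (cases "0 < r \<and> b = d")
    case True
    then have "r - 1 \<le> length (filter (\<lambda>(a, b). b = d) P)" using "2.prems"(2) by auto
    with "2.IH"(1)[OF True P] True ab show ?thesis by (cases "n = d + 1"; cases "n = d") auto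
  next
    case False
    then have "r \<le> length (filter (\<lambda>(a, b). b = d) P)" using "2.prems"(2) by auto
    with "2.IH"(2)[OF False P] False ab show ?thesis by (cases "n = d + 1"; cases "n = d") auto
  qed
qed simp

lemma excursions_exist:
  fixes K B :: "nat \<Rightarrow> int"
  assumes "\<forall>n \<le> d. 1 \<le> K n" "K 0 = 1" "\<forall>n < d. 1 \<le> B n \<and> B n \<le> K n \<and> B n \<le> K (Suc n)"
  shows "\<exists>P. (\<forall>(a, b) \<in> set P. 0 \<le> a \<and> a < b \<and> b \<le> int d) \<and> sorted_wrt (\<ge>) (map fst P) \<and>
    (\<forall>n. int (span_count (int n) ((-1, int d) # P)) = (if n \<le> d then K n else 0)) \<and>
    (\<forall>n. int (inner_span_count (int n) ((-1, int d) # P)) = (if n < d then B n else 0))"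
  using assms
proof (induction d)
  case 0
  show ?case by (rule exI[of _ "[]"]) (use "0.prems" in auto)
next
  case (Suc d)
  then obtain P where P_bounds: "\<forall>(a, b) \<in> set P. 0 \<le> a \<and> a < b \<and> b \<le> int d"
    and P_sorted: "sorted_wrt (\<ge>) (map fst P)"
    and P_spans: "\<forall>n. int (span_count (int n) ((-1, int d) # P)) = (if n \<le> d then K n else 0)"
    and P_inner: "\<forall>n. int (inner_span_count (int n) ((-1, int d) # P)) = (if n < d then B n else 0)"
    by auto
  have B: "1 \<le> B d" "B d \<le> K d" "B d \<le> K (Suc d)" using Suc.prems(3) by auto
  have P_below: "\<forall>(a, b) \<in> set P. a < b \<and> b \<le> int d" using P_bounds by auto
  have "filter (\<lambda>(a, b). a < int d \<and> int d \<le> b) P = filter (\<lambda>(a, b). b = int d) P"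
    by (rule filter_cong) (use P_below in auto)
  then have tops: "int (length (filter (\<lambda>(a, b). b = int d) P)) = K d - 1"
    using P_spans[rule_format, of d] by (simp add: span_count_def)
  txt \<open>To reach depth d + 1, the main excursion and B d - 1 of the K d - 1 others topping at d
    are raised to d + 1, and K (d + 1) - B d new excursions (d, d + 1) are added.\<close>
  define r where "r = nat (B d - 1)"
  define s where "s = nat (K (Suc d) - B d)"
  have "r \<le> length (filter (\<lambda>(a, b). b = int d) P)" using tops B unfolding r_def by linarith
  note raised = span_counts_raise_tops[OF P_below this]
  define P' where "P' = replicate s (int d, int d + 1) @ raise_tops r (int d) P"
  have "int (span_count (int n) ((-1, int (Suc d)) # P')) = (if n \<le> Suc d then K n else 0)" for n
  proof -
    have new: "span_count (int n) ((-1, int (Suc d)) # P') =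
      (if n \<le> Suc d then 1 else 0) + (if n = Suc d then s + r else 0) + span_count (int n) P"
      using raised[of "int n"] by (simp add: P'_def)
    have old: "int (span_count (int n) P) = (if n \<le> d then K n - 1 else 0)"
      using P_spans[rule_format, of n] by (simp split: if_splits)
    consider "n \<le> d" | "n = Suc d" | "Suc d < n" by linarith
    then show ?thesis using new old B unfolding r_def s_def by cases simp_all
  qed
  moreover have "int (inner_span_count (int n) ((-1, int (Suc d)) # P')) = (if n < Suc d then B n else 0)"
    for n
  proof -
    have new: "inner_span_count (int n) ((-1, int (Suc d)) # P') =
      (if n < Suc d then 1 else 0) + (if n = d then r else 0) + inner_span_count (int n) P"
      using raised[of "int n"] by (simp add: P'_def)
    have old: "int (inner_span_count (int n) P) = (if n < d then B n - 1 else 0)"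
      using P_inner[rule_format, of n] by (simp split: if_splits)
    consider "n < d" | "n = d" | "d < n" by linarith
    then show ?thesis using new old B unfolding r_def by cases simp_all
  qed
  moreover have "\<forall>(a, b) \<in> set P'. 0 \<le> a \<and> a < b \<and> b \<le> int (Suc d)"
  proof (intro ballI, clarify)
    fix a b assume "(a, b) \<in> set P'"
    then consider (new) "(a, b) = (int d, int d + 1)" | (raised) "(a, b) \<in> set (raise_tops r (int d) P)"
      unfolding P'_def by auto
    then show "0 \<le> a \<and> a < b \<and> b \<le> int (Suc d)"
    proof cases
      case raised
      then have "a \<in> set (map fst (raise_tops r (int d) P))" by force
      then have "a \<in> set (map fst P)" by (simp only: map_fst_raise_tops)
      then show ?thesis using raised raise_tops_bounds[OF P_below, of r] P_bounds by auto
    qed auto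
  qed
  moreover have "sorted_wrt (\<ge>) (map fst P')"
  proof -
    have "sorted_wrt (\<ge>) (replicate s (int d))" by (induction s) auto
    then show ?thesis using P_sorted P_bounds by (auto simp: P'_def map_fst_raise_tops sorted_wrt_append)
  qed
  ultimately show ?case by blast
qed

lemma chained_if_sorted:
  assumes "\<forall>(a, b) \<in> set P. a < b" "sorted_wrt (\<ge>) (map fst P)" "\<forall>(a, b) \<in> set P. a < b\<^sub>0"
  shows "chained ((a\<^sub>0, b\<^sub>0) # P)"
  using assms
proof (induction P arbitrary: a\<^sub>0 b\<^sub>0)
  case (Cons x P)
  obtain a b where x: "x = (a, b)" by (cases x)
  have "\<forall>(a', b') \<in> set P. a' < b" using Cons.prems(1,2) x by fastforce
  then have "chained ((a, b) # P)" using Cons x by auto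
  then show ?case using Cons.prems(3) x by simp
qed simp

lemma closed_excursion_walk:
  assumes bounds: "\<forall>(a, b) \<in> set P. 0 \<le> a \<and> a < b \<and> b \<le> int D"
    and sorted: "sorted_wrt (\<ge>) (map fst P)" and "D \<le> M"
  defines "h \<equiv> excursion_walk ((-1, int D) # P) @ [-1]"
  shows "level_walk M h"
    and "up_count n h = span_count n ((-1, int D) # P)"
    and "climb_count n h = inner_span_count n ((-1, int D) # P)"
proof -
  let ?P = "(-1, int D) # P"
  have P: "\<forall>(a, b) \<in> set ?P. a < b \<and> -1 \<le> a" using bounds by auto
  have chained: "chained ?P" by (rule chained_if_sorted) (use bounds sorted in auto)
  obtain T where W: "excursion_walk ?P = -1 # T" and "last (excursion_walk ?P) = 0"
    using excursion_walk_hd_last[OF P] by (cases "excursion_walk ?P") auto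
  then have desc: "excursion_walk ?P = [] \<or> [-1] = [] \<or> hd [-1] < last (excursion_walk ?P)" by simp
  show "up_count n h = span_count n ?P" "climb_count n h = inner_span_count n ?P"
    using up_count_append_desc[OF desc] climb_count_append_desc[OF desc] excursion_walk_counts[OF P chained]
    unfolding h_def by simp_all
  have "T \<noteq> []" "set T \<subseteq> {0..int M}"
  proof -
    have "-1 # T = [-1..int D] @ (case P of [] \<Rightarrow> rev [0..int D - 1]
      | (a', b') # _ \<Rightarrow> rev [a' + 1..int D - 1] @ excursion_walk P)"
      unfolding W[symmetric] by (cases P) auto
    then have "T = [0..int D] @ (case P of [] \<Rightarrow> rev [0..int D - 1]
      | (a', b') # _ \<Rightarrow> rev [a' + 1..int D - 1] @ excursion_walk P)"
      by (simp add: upto_rec1)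
    moreover have "set (excursion_walk P) \<subseteq> {0..int M}"
      by (rule set_excursion_walk) (use bounds \<open>D \<le> M\<close> in auto)
    ultimately show "T \<noteq> []" "set T \<subseteq> {0..int M}"
      using bounds \<open>D \<le> M\<close> by (auto split: list.splits)
  qed
  moreover have h: "h = -1 # (T @ [-1])" unfolding h_def W by simp
  moreover have "unit_steps h"
  proof -
    have "unit_steps (-1 # T)" "last (-1 # T) = 0"
      using unit_steps_excursion_walk[OF P chained] \<open>last (excursion_walk ?P) = 0\<close> unfolding W by simp_all
    then show ?thesis unfolding h using unit_steps_snoc[of "-1 # T" "-1"] by simp
  qed
  ultimately show "level_walk M h" unfolding level_walk_def
  proof (intro conjI allI impI)
    fix i assume "1 \<le> i \<and> i \<le> length h - 2"
    then have "h ! i \<in> set T" unfolding h by (auto simp: nth_Cons' nth_append)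
    then show "0 \<le> h ! i" "h ! i \<le> int M" using \<open>set T \<subseteq> {0..int M}\<close> by auto
  qed (auto simp: h nth_append Suc_le_eq)
qed

section \<open>Transit and branch count vectors\<close>

lemma nth_ktilde: "length k = M + 1 \<Longrightarrow> n \<le> M \<Longrightarrow> ktilde k ! n = (if n < M then k ! Suc n else 0)"
  unfolding ktilde_def by (auto simp: nth_append nth_tl)

lemma LM_zero_tail:
  assumes "k \<in> LM M" "k ! n = 0" "n \<le> m" "m \<le> M"
  shows "k ! m = 0"
  using assms(3,4)
proof (induction m rule: dec_induct)
  case (step m)
  then show ?case using assms(1) by (simp add: LM_def)
qed (use assms(2) in simp)

lemma LM_support:
  assumes k: "k \<in> LM M"
  obtains D where "D \<le> M" "\<forall>n \<le> D. 1 \<le> k ! n" "\<forall>n. D < n \<and> n \<le> M \<longrightarrow> k ! n = 0"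
proof -
  define D where "D = Max {n. n \<le> M \<and> k ! n \<noteq> 0}"
  have "0 \<in> {n. n \<le> M \<and> k ! n \<noteq> 0}" using k by (simp add: LM_def)
  then have "D \<in> {n. n \<le> M \<and> k ! n \<noteq> 0}" unfolding D_def by (intro Max_in) auto
  then have D: "D \<le> M" "k ! D \<noteq> 0" "\<And>n. n \<le> M \<Longrightarrow> k ! n \<noteq> 0 \<Longrightarrow> n \<le> D"
    unfolding D_def by (auto intro: Max_ge)
  have "1 \<le> k ! n" if "n \<le> D" for n
  proof -
    have "0 \<le> k ! n" using k that D(1) by (simp add: LM_def)
    moreover have "k ! n \<noteq> 0" using LM_zero_tail[OF k _ that D(1)] D(2) by blast
    ultimately show ?thesis by linarith
  qed
  moreover have "k ! n = 0" if "D < n" "n \<le> M" for n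
    using D(3)[OF that(2)] that(1) by linarith
  ultimately show ?thesis using that D(1) by blast
qed

lemma level_walk_counts_in_box:
  assumes h: "level_walk M h" and n: "n < M + 1"
  defines "k \<equiv> map (\<lambda>n. int (up_count (int n) h)) [0..<M + 1]"
  shows "min 1 (ktilde k ! n) \<le> int (climb_count (int n) h) \<and>
    int (climb_count (int n) h) \<le> min (k ! n) (ktilde k ! n)"
proof (cases "n < M")
  case True
  have ktilde: "ktilde k ! n = int (up_count (int n + 1) h)"
    using nth_ktilde[of k M n] True unfolding k_def by (simp del: upt_Suc add: add.commute)
  have "h \<noteq> []" using h unfolding level_walk_def by auto
  then have "hd h = -1" using h unfolding level_walk_def by (simp add: hd_conv_nth)
  then have "up_count (int n + 1) h > 0 \<Longrightarrow> climb_count (int n) h > 0"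
    using climb_count_pos[of h "int n"] h unfolding level_walk_def by simp
  moreover have "k ! n = int (up_count (int n) h)" using n unfolding k_def by (simp del: upt_Suc)
  ultimately show ?thesis
    using climb_count_le_up_count[of "int n" h] climb_count_le_up_count_Suc[of "int n" h]
    by (cases "up_count (int n + 1) h = 0") (auto simp: ktilde)
next
  case False
  have "\<forall>x \<in> set h. x \<le> int M" using level_walk_range[OF h] by (auto simp: in_set_conv_nth)
  moreover have "n = M" using False n by simp
  ultimately have "climb_count (int n) h = 0" using climb_count_top by simp
  then show ?thesis using nth_ktilde[of k M n] False n unfolding k_def by (simp del: upt_Suc)
qed

lemma box_realised_by_level_walk:
  assumes k: "k \<in> LM M" and b: "length b = M + 1"
    and box: "\<forall>n < M + 1. min 1 (ktilde k ! n) \<le> b ! n \<and> b ! n \<le> min (k ! n) (ktilde k ! n)"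
  obtains h where "level_walk M h"
    "map (\<lambda>n. int (up_count (int n) h)) [0..<M + 1] = k"
    "map (\<lambda>n. int (climb_count (int n) h)) [0..<M + 1] = b"
proof -
  obtain D where D: "D \<le> M" "\<forall>n \<le> D. 1 \<le> k ! n" "\<forall>n. D < n \<and> n \<le> M \<longrightarrow> k ! n = 0"
    using LM_support[OF k] by blast
  have len: "length k = M + 1" using k by (simp add: LM_def)
  have ktilde: "ktilde k ! n = (if n < D then k ! Suc n else 0)" if "n \<le> M" for n
    using nth_ktilde[OF len that] D that by auto
  have "1 \<le> b ! n \<and> b ! n \<le> k ! n \<and> b ! n \<le> k ! Suc n" if "n < D" for n
  proof -
    have "ktilde k ! n = k ! Suc n" "1 \<le> k ! Suc n" using ktilde[of n] D(1,2) that by auto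
    then show ?thesis using box[rule_format, of n] that D(1) by auto
  qed
  then obtain P where P: "\<forall>(a, b) \<in> set P. 0 \<le> a \<and> a < b \<and> b \<le> int D" "sorted_wrt (\<ge>) (map fst P)"
    and spans: "\<forall>n. int (span_count (int n) ((-1, int D) # P)) = (if n \<le> D then k ! n else 0)"
    and inner: "\<forall>n. int (inner_span_count (int n) ((-1, int D) # P)) = (if n < D then b ! n else 0)"
    using excursions_exist[of D "\<lambda>n. k ! n" "\<lambda>n. b ! n"] D(2) k by (auto simp: LM_def)
  let ?h = "excursion_walk ((-1, int D) # P) @ [-1]"
  have "map (\<lambda>n. int (up_count (int n) ?h)) [0..<M + 1] = k"
    using closed_excursion_walk(2)[OF P D(1)] spans D(3) len
    by (intro nth_equalityI) (auto simp del: upt_Suc)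
  moreover have "b ! n = 0" if "D \<le> n" "n \<le> M" for n
    using box[rule_format, of n] ktilde[OF that(2)] that by auto
  then have "map (\<lambda>n. int (climb_count (int n) ?h)) [0..<M + 1] = b"
    using closed_excursion_walk(3)[OF P D(1)] inner b
    by (intro nth_equalityI) (auto simp del: upt_Suc)
  ultimately show ?thesis using that closed_excursion_walk(1)[OF P D(1)] by blast
qed

theorem proposition1:
  fixes z :: "int \<Rightarrow> real" and M :: nat and k :: "int list"
  assumes "strict_mono_on {-1..int M} z"
    and "M \<ge> 1"
    and "k \<in> LM M"
  shows "beta z M ` {p. scat_seq z M p \<and> kappa z M p = k} =
         {b. length b = M + 1 \<and>
             (\<forall>n < M + 1. min 1 (ktilde k ! n) \<le> b ! n \<and> b ! n \<le> min (k ! n) (ktilde k ! n))}"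
proof (intro set_eqI iffI)
  fix b assume "b \<in> beta z M ` {p. scat_seq z M p \<and> kappa z M p = k}"
  then obtain p where p: "scat_seq z M p" "kappa z M p = k" "b = beta z M p" by auto
  then obtain h where h: "level_walk M h" "p = map z h"
    using scat_seq_level_walk[OF assms(1)] by blast
  have "k = map (\<lambda>n. int (up_count (int n) h)) [0..<M + 1]"
    "b = map (\<lambda>n. int (climb_count (int n) h)) [0..<M + 1]"
    using p(2,3) kappa_map_level_walk[OF assms(1) h(1)] beta_map_level_walk[OF assms(1) h(1)]
    unfolding h(2) by simp_all
  then show "b \<in> {b. length b = M + 1 \<and>
      (\<forall>n < M + 1. min 1 (ktilde k ! n) \<le> b ! n \<and> b ! n \<le> min (k ! n) (ktilde k ! n))}"
    using level_walk_counts_in_box[OF h(1)] by (simp del: upt_Suc)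
next
  fix b assume "b \<in> {b. length b = M + 1 \<and>
      (\<forall>n < M + 1. min 1 (ktilde k ! n) \<le> b ! n \<and> b ! n \<le> min (k ! n) (ktilde k ! n))}"
  then obtain h where h: "level_walk M h" "map (\<lambda>n. int (up_count (int n) h)) [0..<M + 1] = k"
    "map (\<lambda>n. int (climb_count (int n) h)) [0..<M + 1] = b"
    using box_realised_by_level_walk[OF assms(3)] by blast
  then have "scat_seq z M (map z h)" "kappa z M (map z h) = k" "beta z M (map z h) = b"
    using level_walk_scat_seq kappa_map_level_walk[OF assms(1)] beta_map_level_walk[OF assms(1)] by auto
  then show "b \<in> beta z M ` {p. scat_seq z M p \<and> kappa z M p = k}" by force
qed

end
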